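(* Let $\mathcal O$ be the suboperad of $\mathrm{CNCB}$ generated by $r:=T_{ubu}$ and $w:=T_{bub}$. Then $\mathcal O$ admits the presentation with generators $r,w$ of arity $2$ and relations $$w\circ_1 w=w\circ_2 w,\qquad r\circ_1 r=r\circ_2 r.$$ That is, $\mathcal O$ is isomorphic, via the morphism sending the generators to $r$ and $w$, to the quotient of the free operad on two binary generators by the operadic congruence generated by these relations.
   Context: For $n\ge2$, a bicoloured noncrossing configuration (BNC) of size $n$ is a regular polygon with vertices $1,\dots,n+1$ clockwise, together with disjoint sets of blue and red arcs among the arcs $(i,j)$, $1\le i<j\le n+1$. The arcs $(i,i+1)$ are the edges ($i$th edge), $(1,n+1)$ is the base, and the others are diagonals. Coloured arcs are pairwise noncrossing ($(i,j),(k,l)$ cross iff $i<k<j<l$ or $k<i<l<j$), and red arcs are diagonals. There is one BNC of size $1$, a blue segment, which is the unit. The operad $\mathrm{CNCB}$ has the BNCs as elements (arity = size). Its composition $\mathfrak C\circ_i\mathfrak D$ ($\mathfrak C$ of size $n$, $\mathfrak D$ of size $m$) glues the base of $\mathfrak D$ on the $i$th edge of $\mathfrak C$. Arcs $(a,b)$ of $\mathfrak C$ become $(\sigma(a),\sigma(b))$ with $\sigma(v)=v$ for $v\le i$ and $v+m-1$ otherwise, and arcs $(a,b)$ of $\mathfrak D$ become $(a+i-1,b+i-1)$, keeping colours. The exception is the arc $(i,i+m)$, which is red if the $i$th edge of $\mathfrak C$ and the base of $\mathfrak D$ are both uncoloured, blue if both are blue, and uncoloured otherwise. For $x,y,z\in\{b,u\}$,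 $T_{xyz}$ denotes the BNC of size $2$ (a triangle with vertices $1,2,3$) whose first edge $(1,2)$ has colour $x$, whose base $(1,3)$ has colour $y$, and whose second edge $(2,3)$ has colour $z$, where $b$ = blue and $u$ = uncoloured. The suboperad generated by a set is the smallest suboperad containing it. *)

theory Defs
  imports Main
begin

datatype colour = Blue | Red | Unc

text \<open>A BNC of size n: vertices 1..n+1; col i j is the colour of the arc (i,j)
  (Unc = uncoloured). Arcs outside 1 <= i < j <= n+1 are canonically Unc.\<close>
record bnc =
  sz :: nat
  col :: "nat \<Rightarrow> nat \<Rightarrow> colour"

definition unit_bnc :: bnc where
  "unit_bnc = \<lparr>sz = 1, col = (\<lambda>i j. if i = 1 \<and> j = 2 then Blue else Unc)\<rparr>"

definition is_bnc :: "bnc \<Rightarrow> bool" where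
  "is_bnc B \<longleftrightarrow> B = unit_bnc \<or>
     (sz B \<ge> 2
      \<and> (\<forall>i j. col B i j \<noteq> Unc \<longrightarrow> 1 \<le> i \<and> i < j \<and> j \<le> sz B + 1)
      \<and> (\<forall>i j. col B i j = Red \<longrightarrow> j \<noteq> i + 1 \<and> \<not> (i = 1 \<and> j = sz B + 1))
      \<and> (\<forall>i j k l. col B i j \<noteq> Unc \<and> col B k l \<noteq> Unc \<longrightarrow> \<not> (i < k \<and> k < j \<and> j < l)))"

definition glue_colour :: "colour \<Rightarrow> colour \<Rightarrow> colour" where
  "glue_colour c d = (if c = Unc \<and> d = Unc then Red
                      else if c = Blue \<and> d = Blue then Blue else Unc)"

text \<open>Partial composition C o_i D (glue base of D on i-th edge of C).\<close>
definition comp :: "bnc \<Rightarrow> nat \<Rightarrow> bnc \<Rightarrow> bnc" where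
  "comp C i D =
    (let n = sz C; m = sz D;
         inimg = (\<lambda>v. v \<le> i \<or> i + m \<le> v);
         sinv = (\<lambda>v. if v \<le> i then v else v + 1 - m)
     in \<lparr>sz = n + m - 1,
         col = (\<lambda>p q.
           if \<not> (1 \<le> p \<and> p < q \<and> q \<le> n + m) then Unc
           else if p = i \<and> q = i + m then glue_colour (col C i (i + 1)) (col D 1 (m + 1))
           else if i \<le> p \<and> q \<le> i + m then col D (p + 1 - i) (q + 1 - i)
           else if inimg p \<and> inimg q then col C (sinv p) (sinv q)
           else Unc)\<rparr>)"

definition suboperad :: "bnc set \<Rightarrow> bool" where
  "suboperad S \<longleftrightarrow> S \<subseteq> {B. is_bnc B} \<and> unit_bnc \<in> S
     \<and> (\<forall>C\<in>S. \<forall>D\<in>S. \<forall>i. 1 \<le> i \<and> i \<le> sz C \<longrightarrow> comp C i D \<in> S)"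

definition generated_suboperad :: "bnc set \<Rightarrow> bnc set" where
  "generated_suboperad G = \<Inter>{S. suboperad S \<and> G \<subseteq> S}"

definition T :: "colour \<Rightarrow> colour \<Rightarrow> colour \<Rightarrow> bnc" where
  "T x y z = \<lparr>sz = 2, col = (\<lambda>i j. if i = 1 \<and> j = 2 then x
                                  else if i = 1 \<and> j = 3 then y
                                  else if i = 2 \<and> j = 3 then z else Unc)\<rparr>"

definition r_gen :: bnc where "r_gen = T Unc Blue Unc"
definition w_gen :: bnc where "w_gen = T Blue Unc Blue"

datatype tree = Leaf | R tree tree | W tree tree

fun leaves :: "tree \<Rightarrow> nat" where
  "leaves Leaf = 1"
| "leaves (R a b) = leaves a + leaves b"
| "leaves (W a b) = leaves a + leaves b"

fun graft :: "tree \<Rightarrow> nat \<Rightarrow> tree \<Rightarrow> tree" where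
  "graft Leaf i s = (if i = 1 then s else Leaf)"
| "graft (R a b) i s = (if i \<le> leaves a then R (graft a i s) b else R a (graft b (i - leaves a) s))"
| "graft (W a b) i s = (if i \<le> leaves a then W (graft a i s) b else W a (graft b (i - leaves a) s))"

inductive cong :: "tree \<Rightarrow> tree \<Rightarrow> bool" where
  relW: "cong (W (W Leaf Leaf) Leaf) (W Leaf (W Leaf Leaf))"
| relR: "cong (R (R Leaf Leaf) Leaf) (R Leaf (R Leaf Leaf))"
| refl: "cong t t"
| sym: "cong t s \<Longrightarrow> cong s t"
| trans: "cong t s \<Longrightarrow> cong s u \<Longrightarrow> cong t u"
| comp: "cong t t' \<Longrightarrow> cong s s' \<Longrightarrow> 1 \<le> i \<Longrightarrow> i \<le> leaves t \<Longrightarrow> cong (graft t i s) (graft t' i s')"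

fun ev :: "tree \<Rightarrow> bnc" where
  "ev Leaf = unit_bnc"
| "ev (R a b) = comp (comp r_gen 2 (ev b)) 1 (ev a)"
| "ev (W a b) = comp (comp w_gen 2 (ev b)) 1 (ev a)"

end

theory Submission
  imports Defs
begin

text \<open>A tree evaluates to an explicit colouring: ev (R a b) is the triangle T_ubu with the
  colourings of a and b glued onto its two edges, and similarly for W with T_bub (tree_col).
  With this description, grafting a tree into a leaf is seen to be composition by a pointwise
  comparison of colours, and the image of ev is visibly the smallest suboperad containing r and w.

  Both relations are respected because gluing a generator onto an edge of a copy of itself
  produces the diagonal glue_colour (edge colour) (base colour), which is uncoloured for r
  and for w. Conversely, associativity lets one rotate every tree until the left child of the
  root is a leaf or a node of the other generator. For such trees the generator at the root is
  the colour of the base, the size k of the left subtree is the largest one for which the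
  diagonal (1, k + 1) is coloured (it joins an edge and a base colour of different generators),
  and the colourings of the two subtrees are restrictions of the whole colouring. Induction on
  the number of leaves then shows that ev t = ev s forces t and s to be congruent.\<close>

section \<open>Colourings of compositions\<close>

definition comp_col ::
    "nat \<Rightarrow> (nat \<Rightarrow> nat \<Rightarrow> colour) \<Rightarrow> nat \<Rightarrow> nat \<Rightarrow> (nat \<Rightarrow> nat \<Rightarrow> colour) \<Rightarrow> nat \<Rightarrow> nat \<Rightarrow> colour" where
  "comp_col n C i m D p q =
    (if \<not> (1 \<le> p \<and> p < q \<and> q \<le> n + m) then Unc
     else if p = i \<and> q = i + m then glue_colour (C i (i + 1)) (D 1 (m + 1))
     else if i \<le> p \<and> q \<le> i + m then D (p + 1 - i) (q + 1 - i)
     else if (p \<le> i \<or> i + m \<le> p) \<and> (q \<le> i \<or> i + m \<le> q) then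
       C (if p \<le> i then p else p + 1 - m) (if q \<le> i then q else q + 1 - m)
     else Unc)"

lemma comp_eq_record:
  "comp C i D = \<lparr>sz = sz C + sz D - 1, col = comp_col (sz C) (col C) i (sz D) (col D)\<rparr>"
  by (simp add: comp_def Let_def) (intro ext, simp add: comp_col_def)

lemma comp_col_out: "\<not> (1 \<le> p \<and> p < q \<and> q \<le> n + m) \<Longrightarrow> comp_col n C i m D p q = Unc"
  by (simp add: comp_col_def)

context
  fixes n m i :: nat and C D :: "nat \<Rightarrow> nat \<Rightarrow> colour"
  assumes m_pos: "1 \<le> m"
begin

lemma comp_col_before: "1 \<le> p \<Longrightarrow> p < q \<Longrightarrow> q \<le> i \<Longrightarrow> i \<le> n \<Longrightarrow> comp_col n C i m D p q = C p q"
  using m_pos by (auto simp: comp_col_def)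

lemma comp_col_glued: "p = i \<Longrightarrow> q = i + m \<Longrightarrow> 1 \<le> i \<Longrightarrow> i \<le> n \<Longrightarrow>
    comp_col n C i m D p q = glue_colour (C i (i + 1)) (D 1 (m + 1))"
  using m_pos by (auto simp: comp_col_def)

lemma comp_col_inner: "i \<le> p \<Longrightarrow> p < q \<Longrightarrow> q \<le> i + m \<Longrightarrow> \<not> (p = i \<and> q = i + m) \<Longrightarrow> 1 \<le> i \<Longrightarrow> i \<le> n \<Longrightarrow>
    comp_col n C i m D p q = D (p + 1 - i) (q + 1 - i)"
  using m_pos by (auto simp: comp_col_def)

lemma comp_col_spanning: "1 \<le> p \<Longrightarrow> p \<le> i \<Longrightarrow> i + m \<le> q \<Longrightarrow> q \<le> n + m \<Longrightarrow> \<not> (p = i \<and> q = i + m) \<Longrightarrow>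
    comp_col n C i m D p q = C p (q + 1 - m)"
  using m_pos by (auto simp: comp_col_def)

lemma comp_col_after: "i + m \<le> p \<Longrightarrow> p < q \<Longrightarrow> q \<le> n + m \<Longrightarrow> 1 \<le> i \<Longrightarrow>
    comp_col n C i m D p q = C (p + 1 - m) (q + 1 - m)"
  using m_pos by (auto simp: comp_col_def)

lemma comp_col_crossing: "(p < i \<and> i < q \<and> q < i + m) \<or> (i < p \<and> p < i + m \<and> i + m < q) \<Longrightarrow>
    comp_col n C i m D p q = Unc"
  using m_pos by (auto simp: comp_col_def)

end

text \<open>The colouring of comp (comp (T x y x) 2 B) 1 A for configurations A and B of sizes k and l.\<close>

definition join_col ::
    "colour \<Rightarrow> colour \<Rightarrow> nat \<Rightarrow> nat \<Rightarrow> (nat \<Rightarrow> nat \<Rightarrow> colour) \<Rightarrow> (nat \<Rightarrow> nat \<Rightarrow> colour) \<Rightarrow> nat \<Rightarrow> nat \<Rightarrow> colour" where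
  "join_col x y k l A B p q =
    (if p = 1 \<and> q = k + l + 1 then y
     else if p = 1 \<and> q = k + 1 then glue_colour x (A 1 (k + 1))
     else if p = k + 1 \<and> q = k + l + 1 then glue_colour x (B 1 (l + 1))
     else if 1 \<le> p \<and> p < q \<and> q \<le> k + 1 then A p q
     else if k + 1 \<le> p \<and> p < q \<and> q \<le> k + l + 1 then B (p - k) (q - k)
     else Unc)"

lemma join_col_out: "1 \<le> k \<Longrightarrow> 1 \<le> l \<Longrightarrow> \<not> (1 \<le> p \<and> p < q \<and> q \<le> k + l + 1) \<Longrightarrow> join_col x y k l A B p q = Unc"
  by (auto simp: join_col_def)

lemma join_col_base: "p = 1 \<Longrightarrow> q = k + l + 1 \<Longrightarrow> join_col x y k l A B p q = y"
  by (simp add: join_col_def)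

lemma join_col_left_edge: "1 \<le> l \<Longrightarrow> p = 1 \<Longrightarrow> q = k + 1 \<Longrightarrow>
    join_col x y k l A B p q = glue_colour x (A 1 (k + 1))"
  by (simp add: join_col_def)

lemma join_col_right_edge: "1 \<le> k \<Longrightarrow> p = k + 1 \<Longrightarrow> q = k + l + 1 \<Longrightarrow>
    join_col x y k l A B p q = glue_colour x (B 1 (l + 1))"
  by (simp add: join_col_def)

lemma join_col_left: "1 \<le> l \<Longrightarrow> 1 \<le> p \<Longrightarrow> p < q \<Longrightarrow> q \<le> k + 1 \<Longrightarrow> \<not> (p = 1 \<and> q = k + 1) \<Longrightarrow>
    join_col x y k l A B p q = A p q"
  by (auto simp: join_col_def)

lemma join_col_right: "1 \<le> k \<Longrightarrow> k + 1 \<le> p \<Longrightarrow> p < q \<Longrightarrow> q \<le> k + l + 1 \<Longrightarrow>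
    \<not> (p = k + 1 \<and> q = k + l + 1) \<Longrightarrow> join_col x y k l A B p q = B (p - k) (q - k)"
  by (auto simp: join_col_def)

lemma join_col_crossing: "p < k + 1 \<Longrightarrow> k + 1 < q \<Longrightarrow> \<not> (p = 1 \<and> q = k + l + 1) \<Longrightarrow>
    join_col x y k l A B p q = Unc"
  by (auto simp: join_col_def)

lemma comp_col_translate:
  assumes C': "\<And>p q. k + 1 \<le> p \<Longrightarrow> p < q \<Longrightarrow> q \<le> k + l + 1 \<Longrightarrow> \<not> (p = k + 1 \<and> q = k + l + 1) \<Longrightarrow>
      C' p q = C (p - k) (q - k)"
    and m: "1 \<le> m" and j: "1 \<le> j" "j \<le> l" and N: "k + l \<le> N"
    and pq: "k + 1 \<le> p" "p < q" "q \<le> k + l + m" "\<not> (p = k + 1 \<and> q = k + l + m)"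
  shows "comp_col N C' (j + k) m D p q = comp_col l C j m D (p - k) (q - k)"
proof -
  let ?i = "j + k"
  consider (before) "q \<le> ?i" | (glued) "p = ?i \<and> q = ?i + m"
    | (inner) "?i \<le> p \<and> q \<le> ?i + m \<and> \<not> (p = ?i \<and> q = ?i + m)"
    | (spanning) "p \<le> ?i \<and> ?i + m \<le> q \<and> \<not> (p = ?i \<and> q = ?i + m)" | (after) "?i + m \<le> p"
    | (crossing) "(p < ?i \<and> ?i < q \<and> q < ?i + m) \<or> (?i < p \<and> p < ?i + m \<and> ?i + m < q)"
    using pq by linarith
  then show ?thesis
  proof cases
    case before
    have "comp_col N C' ?i m D p q = C' p q" by (rule comp_col_before) (use m j N pq before in linarith)+
    also have "\<dots> = C (p - k) (q - k)" by (rule C') (use j pq before in linarith)+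
    also have "\<dots> = comp_col l C j m D (p - k) (q - k)"
      by (rule comp_col_before[symmetric]) (use m j pq before in linarith)+
    finally show ?thesis .
  next
    case glued
    have "C' ?i (?i + 1) = C j (j + 1)" using C'[of ?i "?i + 1"] glued j pq by force
    moreover have "comp_col l C j m D (p - k) (q - k) = glue_colour (C j (j + 1)) (D 1 (m + 1))"
      by (rule comp_col_glued) (use m j glued in linarith)+
    moreover have "comp_col N C' ?i m D p q = glue_colour (C' ?i (?i + 1)) (D 1 (m + 1))"
      by (rule comp_col_glued) (use m j N glued in linarith)+
    ultimately show ?thesis by simp
  next
    case inner
    have "comp_col N C' ?i m D p q = D (p + 1 - ?i) (q + 1 - ?i)"
      by (rule comp_col_inner) (use m j N pq inner in linarith)+
    moreover have "comp_col l C j m D (p - k) (q - k) = D (p - k + 1 - j) (q - k + 1 - j)"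
      by (rule comp_col_inner) (use m j pq inner in linarith)+
    moreover have "p - k + 1 - j = p + 1 - ?i" "q - k + 1 - j = q + 1 - ?i"
      using pq inner by linarith+
    ultimately show ?thesis by simp
  next
    case spanning
    have "comp_col N C' ?i m D p q = C' p (q + 1 - m)"
      by (rule comp_col_spanning) (use m j N pq spanning in linarith)+
    also have "\<dots> = C (p - k) (q + 1 - m - k)" by (rule C') (use m j pq spanning in linarith)+
    also have "q + 1 - m - k = q - k + 1 - m" using pq spanning by linarith
    also have "C (p - k) \<dots> = comp_col l C j m D (p - k) (q - k)"
      by (rule comp_col_spanning[symmetric]) (use m j pq spanning in linarith)+
    finally show ?thesis .
  next
    case after
    have "comp_col N C' ?i m D p q = C' (p + 1 - m) (q + 1 - m)"
      by (rule comp_col_after) (use m j N pq after in linarith)+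
    moreover have "\<dots> = C (p + 1 - m - k) (q + 1 - m - k)" by (rule C') (use m j pq after in linarith)+
    moreover have "comp_col l C j m D (p - k) (q - k) = C (p - k + 1 - m) (q - k + 1 - m)"
      by (rule comp_col_after) (use m j pq after in linarith)+
    moreover have "p + 1 - m - k = p - k + 1 - m" "q + 1 - m - k = q - k + 1 - m"
      using pq after by linarith+
    ultimately show ?thesis by simp
  next
    case crossing
    have "comp_col N C' ?i m D p q = Unc" by (rule comp_col_crossing) (use m crossing in linarith)+
    moreover have "comp_col l C j m D (p - k) (q - k) = Unc"
      by (rule comp_col_crossing) (use m pq crossing in linarith)+
    ultimately show ?thesis by simp
  qed
qed

lemma join_col_comp_left:
  assumes i: "1 \<le> i" "i \<le> k" and m: "1 \<le> m" and l: "1 \<le> l"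
    and x: "x \<in> {Blue, Unc}" and d: "D 1 (m + 1) \<in> {Blue, Unc}"
    and A_unit: "k = 1 \<Longrightarrow> A 1 2 = Blue"
    \<comment> \<open>a unit A has its edge glued both to x and to the base of D; these gluings associate as it is Blue\<close>
  shows "join_col x y (k + m - 1) l (comp_col k A i m D) B = comp_col (k + l) (join_col x y k l A B) i m D"
proof (intro ext)
  fix p q
  define K where "K = k + m - 1"
  have K: "K + 1 = k + m" "1 \<le> K" using i m by (simp_all add: K_def)
  let ?J = "join_col x y k l A B"
  consider (out) "\<not> (1 \<le> p \<and> p < q \<and> q \<le> k + l + m)" | (base) "p = 1 \<and> q = k + l + m"
    | (left_edge) "p = 1 \<and> q = k + m" | (right_edge) "p = k + m \<and> q = k + l + m"
    | (left) "1 \<le> p \<and> p < q \<and> q \<le> k + m \<and> \<not> (p = 1 \<and> q = k + m)"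
    | (right) "k + m \<le> p \<and> p < q \<and> q \<le> k + l + m \<and> \<not> (p = k + m \<and> q = k + l + m)"
    | (crossing) "1 \<le> p \<and> p < k + m \<and> k + m < q \<and> q \<le> k + l + m \<and> \<not> (p = 1 \<and> q = k + l + m)"
    by linarith
  then show "join_col x y K l (comp_col k A i m D) B p q = comp_col (k + l) ?J i m D p q"
  proof cases
    case out
    have "join_col x y K l (comp_col k A i m D) B p q = Unc" by (rule join_col_out) (use out K l in linarith)+
    moreover have "comp_col (k + l) ?J i m D p q = Unc" by (rule comp_col_out) (use out m in linarith)+
    ultimately show ?thesis by simp
  next
    case base
    have "join_col x y K l (comp_col k A i m D) B p q = y" by (rule join_col_base) (use base K in linarith)+
    moreover have "comp_col (k + l) ?J i m D p q = ?J p (q + 1 - m)"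
      by (rule comp_col_spanning) (use base i l m in linarith)+
    moreover have "?J p (q + 1 - m) = y" by (rule join_col_base) (use base m in linarith)+
    ultimately show ?thesis by simp
  next
    case left_edge
    have "join_col x y K l (comp_col k A i m D) B p q = glue_colour x (comp_col k A i m D 1 (K + 1))"
      by (rule join_col_left_edge) (use left_edge K l in linarith)+
    moreover have "glue_colour x (comp_col k A i m D 1 (k + m)) = comp_col (k + l) ?J i m D p q"
    proof (cases "k = 1")
      case True
      then have "i = 1" using i by linarith
      then show ?thesis using True left_edge A_unit x d l m
        by (auto simp: comp_col_def join_col_def glue_colour_def numeral_2_eq_2)
    next
      case False
      have "comp_col k A i m D 1 (k + m) = A 1 (k + m + 1 - m)"
        by (rule comp_col_spanning) (use False i m in linarith)+
      moreover have "comp_col (k + l) ?J i m D p q = ?J p (q + 1 - m)"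
        by (rule comp_col_spanning) (use False left_edge i l m in linarith)+
      moreover have "?J p (q + 1 - m) = glue_colour x (A 1 (k + 1))"
        by (rule join_col_left_edge) (use left_edge l in linarith)+
      ultimately show ?thesis by simp
    qed
    ultimately show ?thesis using K by simp
  next
    case right_edge
    have "join_col x y K l (comp_col k A i m D) B p q = glue_colour x (B 1 (l + 1))"
      by (rule join_col_right_edge) (use right_edge K l in linarith)+
    moreover have "comp_col (k + l) ?J i m D p q = ?J (p + 1 - m) (q + 1 - m)"
      by (rule comp_col_after) (use right_edge i l m in linarith)+
    moreover have "?J (p + 1 - m) (q + 1 - m) = glue_colour x (B 1 (l + 1))"
      by (rule join_col_right_edge) (use right_edge i l m in linarith)+
    ultimately show ?thesis by simp
  next
    case left
    have "join_col x y K l (comp_col k A i m D) B p q = comp_col k A i m D p q"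
      by (rule join_col_left) (use left K l in linarith)+
    moreover have "comp_col (k + l) ?J (i + 0) m D p q = comp_col k A i m D (p - 0) (q - 0)"
      by (rule comp_col_translate) (use left i l m in \<open>auto intro: join_col_left\<close>)
    ultimately show ?thesis by simp
  next
    case right
    have "join_col x y K l (comp_col k A i m D) B p q = B (p - K) (q - K)"
      by (rule join_col_right) (use right K in linarith)+
    moreover have "comp_col (k + l) ?J i m D p q = ?J (p + 1 - m) (q + 1 - m)"
      by (rule comp_col_after) (use right i l m in linarith)+
    moreover have "?J (p + 1 - m) (q + 1 - m) = B (p + 1 - m - k) (q + 1 - m - k)"
      by (rule join_col_right) (use right i m in linarith)+
    moreover have "p - K = p + 1 - m - k" "q - K = q + 1 - m - k" using right K by linarith+
    ultimately show ?thesis by simp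
  next
    case crossing
    have "join_col x y K l (comp_col k A i m D) B p q = Unc"
      by (rule join_col_crossing) (use crossing K in linarith)+
    moreover have "comp_col (k + l) ?J i m D p q = Unc"
    proof -
      consider "p \<le> i" | "i < p \<and> p < i + m" | "i + m \<le> p" by linarith
      then show ?thesis
      proof cases
        case 1
        have "comp_col (k + l) ?J i m D p q = ?J p (q + 1 - m)"
          by (rule comp_col_spanning) (use 1 crossing i m in linarith)+
        also have "\<dots> = Unc" by (rule join_col_crossing) (use 1 crossing i m in linarith)+
        finally show ?thesis .
      next
        case 2
        show ?thesis by (rule comp_col_crossing) (use 2 crossing i m in linarith)+
      next
        case 3
        have "comp_col (k + l) ?J i m D p q = ?J (p + 1 - m) (q + 1 - m)"
          by (rule comp_col_after) (use 3 crossing i m in linarith)+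
        also have "\<dots> = Unc" by (rule join_col_crossing) (use 3 crossing i m in linarith)+
        finally show ?thesis .
      qed
    qed
    ultimately show ?thesis by simp
  qed
qed

lemma join_col_comp_right:
  assumes j: "1 \<le> j" "j \<le> l" and m: "1 \<le> m" and k: "1 \<le> k"
    and x: "x \<in> {Blue, Unc}" and d: "D 1 (m + 1) \<in> {Blue, Unc}"
    and B_unit: "l = 1 \<Longrightarrow> B 1 2 = Blue"
  shows "join_col x y k (l + m - 1) A (comp_col l B j m D) = comp_col (k + l) (join_col x y k l A B) (j + k) m D"
proof (intro ext)
  fix p q
  define L where "L = l + m - 1"
  have L: "L + 1 = l + m" "1 \<le> L" using j m by (simp_all add: L_def)
  let ?i = "j + k" and ?J = "join_col x y k l A B"
  consider (out) "\<not> (1 \<le> p \<and> p < q \<and> q \<le> k + l + m)" | (base) "p = 1 \<and> q = k + l + m"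
    | (left_edge) "p = 1 \<and> q = k + 1" | (right_edge) "p = k + 1 \<and> q = k + l + m"
    | (left) "1 \<le> p \<and> p < q \<and> q \<le> k + 1 \<and> \<not> (p = 1 \<and> q = k + 1)"
    | (right) "k + 1 \<le> p \<and> p < q \<and> q \<le> k + l + m \<and> \<not> (p = k + 1 \<and> q = k + l + m)"
    | (crossing) "1 \<le> p \<and> p < k + 1 \<and> k + 1 < q \<and> q \<le> k + l + m \<and> \<not> (p = 1 \<and> q = k + l + m)"
    by linarith
  then show "join_col x y k L A (comp_col l B j m D) p q = comp_col (k + l) ?J ?i m D p q"
  proof cases
    case out
    have "join_col x y k L A (comp_col l B j m D) p q = Unc" by (rule join_col_out) (use out L k in linarith)+
    moreover have "comp_col (k + l) ?J ?i m D p q = Unc" by (rule comp_col_out) (use out m in linarith)+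
    ultimately show ?thesis by simp
  next
    case base
    have "join_col x y k L A (comp_col l B j m D) p q = y" by (rule join_col_base) (use base L in linarith)+
    moreover have "comp_col (k + l) ?J ?i m D p q = ?J p (q + 1 - m)"
      by (rule comp_col_spanning) (use base j k m in linarith)+
    moreover have "?J p (q + 1 - m) = y" by (rule join_col_base) (use base m in linarith)+
    ultimately show ?thesis by simp
  next
    case left_edge
    have "join_col x y k L A (comp_col l B j m D) p q = glue_colour x (A 1 (k + 1))"
      by (rule join_col_left_edge) (use left_edge L in linarith)+
    moreover have "comp_col (k + l) ?J ?i m D p q = ?J p q"
      by (rule comp_col_before) (use left_edge j k m in linarith)+
    moreover have "?J p q = glue_colour x (A 1 (k + 1))"
      by (rule join_col_left_edge) (use left_edge j in linarith)+
    ultimately show ?thesis by simp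
  next
    case right_edge
    have "join_col x y k L A (comp_col l B j m D) p q = glue_colour x (comp_col l B j m D 1 (L + 1))"
      by (rule join_col_right_edge) (use right_edge L k in linarith)+
    moreover have "glue_colour x (comp_col l B j m D 1 (l + m)) = comp_col (k + l) ?J ?i m D p q"
    proof (cases "l = 1")
      case True
      then have "j = 1" using j by linarith
      then show ?thesis using True right_edge B_unit x d k m
        by (auto simp: comp_col_def join_col_def glue_colour_def numeral_2_eq_2)
    next
      case False
      have "comp_col l B j m D 1 (l + m) = B 1 (l + m + 1 - m)"
        by (rule comp_col_spanning) (use False j m in linarith)+
      moreover have "comp_col (k + l) ?J ?i m D p q = ?J p (q + 1 - m)"
        by (rule comp_col_spanning) (use False right_edge j k m in linarith)+
      moreover have "?J p (q + 1 - m) = glue_colour x (B 1 (l + 1))"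
        by (rule join_col_right_edge) (use right_edge k m in linarith)+
      ultimately show ?thesis by simp
    qed
    ultimately show ?thesis using L by simp
  next
    case left
    have "join_col x y k L A (comp_col l B j m D) p q = A p q"
      by (rule join_col_left) (use left L in linarith)+
    moreover have "comp_col (k + l) ?J ?i m D p q = ?J p q"
      by (rule comp_col_before) (use left j k m in linarith)+
    moreover have "?J p q = A p q" by (rule join_col_left) (use left j in linarith)+
    ultimately show ?thesis by simp
  next
    case right
    have "join_col x y k L A (comp_col l B j m D) p q = comp_col l B j m D (p - k) (q - k)"
      by (rule join_col_right) (use right L k in linarith)+
    moreover have "comp_col (k + l) ?J ?i m D p q = comp_col l B j m D (p - k) (q - k)"
      by (rule comp_col_translate) (use right j k m in \<open>auto intro: join_col_right\<close>)
    ultimately show ?thesis by simp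
  next
    case crossing
    have "join_col x y k L A (comp_col l B j m D) p q = Unc"
      by (rule join_col_crossing) (use crossing L in linarith)+
    moreover have "comp_col (k + l) ?J ?i m D p q = Unc"
    proof -
      consider "q \<le> ?i" | "?i < q \<and> q < ?i + m" | "?i + m \<le> q" by linarith
      then show ?thesis
      proof cases
        case 1
        have "comp_col (k + l) ?J ?i m D p q = ?J p q"
          by (rule comp_col_before) (use 1 crossing j k m in linarith)+
        also have "\<dots> = Unc" by (rule join_col_crossing) (use 1 crossing j m in linarith)+
        finally show ?thesis .
      next
        case 2
        show ?thesis by (rule comp_col_crossing) (use 2 crossing j m in linarith)+
      next
        case 3
        have "comp_col (k + l) ?J ?i m D p q = ?J p (q + 1 - m)"
          by (rule comp_col_spanning) (use 3 crossing j m in linarith)+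
        also have "\<dots> = Unc" by (rule join_col_crossing) (use 3 crossing j m in linarith)+
        finally show ?thesis .
      qed
    qed
    ultimately show ?thesis by simp
  qed
qed

section \<open>Evaluating trees\<close>

datatype gen = GenR | GenW

fun edge_col :: "gen \<Rightarrow> colour" where
  "edge_col GenR = Unc"
| "edge_col GenW = Blue"

fun base_col :: "gen \<Rightarrow> colour" where
  "base_col GenR = Blue"
| "base_col GenW = Unc"

fun gen_bnc :: "gen \<Rightarrow> bnc" where
  "gen_bnc GenR = r_gen"
| "gen_bnc GenW = w_gen"

fun node :: "gen \<Rightarrow> tree \<Rightarrow> tree \<Rightarrow> tree" where
  "node GenR a b = R a b"
| "node GenW a b = W a b"

lemma edge_col_in: "edge_col g \<in> {Blue, Unc}"
  by (cases g) simp_all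

lemma tree_induct_node [case_names Leaf node]:
  "P Leaf \<Longrightarrow> (\<And>g a b. P a \<Longrightarrow> P b \<Longrightarrow> P (node g a b)) \<Longrightarrow> P t"
  by (induction t) (metis node.simps)+

lemma tree_cases_node [case_names Leaf node]:
  "(t = Leaf \<Longrightarrow> P) \<Longrightarrow> (\<And>g a b. t = node g a b \<Longrightarrow> P) \<Longrightarrow> P"
  by (cases t) (metis node.simps)+

lemma node_neq_Leaf [simp]: "node g a b \<noteq> Leaf" "Leaf \<noteq> node g a b"
  by (cases g; simp)+

lemma leaves_node [simp]: "leaves (node g a b) = leaves a + leaves b"
  by (cases g) simp_all

lemma graft_node:
  "graft (node g a b) i s = (if i \<le> leaves a then node g (graft a i s) b else node g a (graft b (i - leaves a) s))"
  by (cases g) simp_all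

lemma ev_node: "ev (node g a b) = comp (comp (gen_bnc g) 2 (ev b)) 1 (ev a)"
  by (cases g) simp_all

lemma leaves_pos: "1 \<le> leaves t"
  by (induction t) simp_all

lemma leaves_eq_1_iff: "leaves t = 1 \<longleftrightarrow> t = Leaf"
proof (cases t rule: tree_cases_node)
  case (node g a b)
  then show ?thesis using leaves_pos[of a] leaves_pos[of b] by simp
qed simp

lemma leaves_graft: "1 \<le> i \<Longrightarrow> i \<le> leaves t \<Longrightarrow> leaves (graft t i s) = leaves t + leaves s - 1"
  by (induction t arbitrary: i) auto

fun tree_col :: "tree \<Rightarrow> nat \<Rightarrow> nat \<Rightarrow> colour" where
  "tree_col Leaf = (\<lambda>p q. if p = 1 \<and> q = 2 then Blue else Unc)"
| "tree_col (R a b) = join_col Unc Blue (leaves a) (leaves b) (tree_col a) (tree_col b)"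
| "tree_col (W a b) = join_col Blue Unc (leaves a) (leaves b) (tree_col a) (tree_col b)"

lemma tree_col_node:
  "tree_col (node g a b) = join_col (edge_col g) (base_col g) (leaves a) (leaves b) (tree_col a) (tree_col b)"
  by (cases g) simp_all

lemma tree_col_unit_edge: "leaves t = 1 \<Longrightarrow> tree_col t 1 2 = Blue"
  using leaves_eq_1_iff[of t] by auto

lemma tree_col_out: "\<not> (1 \<le> p \<and> p < q \<and> q \<le> leaves t + 1) \<Longrightarrow> tree_col t p q = Unc"
proof (induction t arbitrary: p q rule: tree_induct_node)
  case (node g a b)
  then show ?case using leaves_pos[of a] leaves_pos[of b] by (auto simp: tree_col_node join_col_def)
qed (auto simp: numeral_2_eq_2)

lemma tree_col_base_node: "tree_col (node g a b) 1 (leaves (node g a b) + 1) = base_col g"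
  by (simp add: tree_col_node join_col_base)

lemma tree_col_base_in: "tree_col t 1 (leaves t + 1) \<in> {Blue, Unc}"
proof (cases t rule: tree_cases_node)
  case (node g a b)
  then show ?thesis using tree_col_base_node[of g a b] by (cases g) simp_all
qed simp

lemma tree_col_graft:
  "1 \<le> i \<Longrightarrow> i \<le> leaves t \<Longrightarrow> tree_col (graft t i s) = comp_col (leaves t) (tree_col t) i (leaves s) (tree_col s)"
proof (induction t arbitrary: i rule: tree_induct_node)
  case Leaf
  then have "i = 1" by simp
  then show ?case
    using leaves_pos[of s] tree_col_out[of _ _ s] tree_col_base_in[of s]
    by (intro ext) (auto simp: comp_col_def glue_colour_def)
next
  case (node g a b)
  let ?x = "edge_col g" and ?y = "base_col g" and ?k = "leaves a" and ?l = "leaves b" and ?m = "leaves s"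
  show ?case
  proof (cases "i \<le> ?k")
    case True
    have "tree_col (graft (node g a b) i s)
        = join_col ?x ?y (?k + ?m - 1) ?l (comp_col ?k (tree_col a) i ?m (tree_col s)) (tree_col b)"
      using True node by (simp add: graft_node tree_col_node leaves_graft)
    also have "\<dots> = comp_col (?k + ?l) (join_col ?x ?y ?k ?l (tree_col a) (tree_col b)) i ?m (tree_col s)"
      using True node.prems leaves_pos[of b] leaves_pos[of s]
      by (intro join_col_comp_left edge_col_in tree_col_base_in tree_col_unit_edge) simp_all
    finally show ?thesis by (simp add: tree_col_node)
  next
    case False
    define j where "j = i - ?k"
    have i: "i = j + ?k" using False by (simp add: j_def)
    have "tree_col (graft (node g a b) i s)
        = join_col ?x ?y ?k (?l + ?m - 1) (tree_col a) (comp_col ?l (tree_col b) j ?m (tree_col s))"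
      using False node by (simp add: graft_node tree_col_node leaves_graft j_def)
    also have "\<dots> = comp_col (?k + ?l) (join_col ?x ?y ?k ?l (tree_col a) (tree_col b)) i ?m (tree_col s)"
      unfolding i using False node.prems leaves_pos[of a] leaves_pos[of s]
      by (intro join_col_comp_right edge_col_in tree_col_base_in tree_col_unit_edge) (simp_all add: j_def)
    finally show ?thesis by (simp add: tree_col_node)
  qed
qed

lemma node_eq_graft: "node g a b = graft (graft (node g Leaf Leaf) 2 b) 1 a"
  by (cases g) simp_all

lemma gen_bnc_eq_record: "gen_bnc g = \<lparr>sz = 2, col = tree_col (node g Leaf Leaf)\<rparr>"
proof -
  have "glue_colour (edge_col g) Blue = edge_col g" by (cases g) (simp_all add: glue_colour_def)
  then show ?thesis
    by (cases g) (auto simp: r_gen_def w_gen_def T_def tree_col_node join_col_def intro!: ext)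
qed

lemma ev_eq_tree_col: "ev t = \<lparr>sz = leaves t, col = tree_col t\<rparr>"
proof (induction t rule: tree_induct_node)
  case Leaf
  then show ?case by (simp add: unit_bnc_def)
next
  case (node g a b)
  let ?t = "graft (graft (node g Leaf Leaf) 2 b) 1 a"
  have "ev (node g a b) = comp (comp \<lparr>sz = 2, col = tree_col (node g Leaf Leaf)\<rparr> 2 (ev b)) 1 (ev a)"
    by (simp add: ev_node gen_bnc_eq_record)
  also have "\<dots> = \<lparr>sz = leaves ?t, col = tree_col ?t\<rparr>"
    using node leaves_pos[of a] leaves_pos[of b]
    by (simp add: comp_eq_record tree_col_graft leaves_graft numeral_2_eq_2)
  finally show ?case by (simp only: node_eq_graft[symmetric])
qed

lemma ev_graft: "1 \<le> i \<Longrightarrow> i \<le> leaves t \<Longrightarrow> ev (graft t i s) = comp (ev t) i (ev s)"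
  by (simp add: ev_eq_tree_col comp_eq_record tree_col_graft leaves_graft)

section \<open>The image of the evaluation\<close>

lemma tree_col_node_nonempty:
  assumes "tree_col (node g a b) p q \<noteq> Unc"
  shows "(p = 1 \<and> q = leaves a + leaves b + 1) \<or> (p = 1 \<and> q = leaves a + 1)
    \<or> (p = leaves a + 1 \<and> q = leaves a + leaves b + 1)
    \<or> (1 \<le> p \<and> p < q \<and> q \<le> leaves a + 1 \<and> tree_col a p q = tree_col (node g a b) p q)
    \<or> (leaves a + 1 \<le> p \<and> p < q \<and> q \<le> leaves a + leaves b + 1
        \<and> tree_col b (p - leaves a) (q - leaves a) = tree_col (node g a b) p q)"
  using assms leaves_pos[of a] leaves_pos[of b]
  by (auto simp: tree_col_node join_col_def split: if_splits)

lemma tree_col_edge_not_red: "tree_col t p (p + 1) \<noteq> Red"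
proof (induction t arbitrary: p rule: tree_induct_node)
  case (node g a b)
  let ?k = "leaves a" and ?l = "leaves b" and ?J = "tree_col (node g a b)"
  have unit_edge: "glue_colour (edge_col g) (tree_col c 1 (leaves c + 1)) \<noteq> Red" if "leaves c = 1" for c
    using that tree_col_unit_edge[OF that] edge_col_in[of g] by (auto simp: glue_colour_def numeral_2_eq_2)
  show ?case
  proof
    assume red: "?J p (p + 1) = Red"
    then have "?J p (p + 1) \<noteq> Unc" by simp
    from tree_col_node_nonempty[OF this] show False
    proof (elim disjE)
      assume "p = 1 \<and> p + 1 = ?k + ?l + 1"
      then show False using leaves_pos[of a] leaves_pos[of b] by linarith
    next
      assume edge: "p = 1 \<and> p + 1 = ?k + 1"
      have "?J p (p + 1) = glue_colour (edge_col g) (tree_col a 1 (?k + 1))"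
        unfolding tree_col_node by (rule join_col_left_edge) (use edge leaves_pos[of b] in simp_all)
      then show False using red edge unit_edge[of a] by simp
    next
      assume edge: "p = ?k + 1 \<and> p + 1 = ?k + ?l + 1"
      have "?J p (p + 1) = glue_colour (edge_col g) (tree_col b 1 (?l + 1))"
        unfolding tree_col_node by (rule join_col_right_edge) (use edge leaves_pos[of a] in simp_all)
      then show False using red edge unit_edge[of b] by simp
    next
      assume "1 \<le> p \<and> p < p + 1 \<and> p + 1 \<le> ?k + 1 \<and> tree_col a p (p + 1) = ?J p (p + 1)"
      then show False using red node.IH(1)[of p] by simp
    next
      assume inner: "?k + 1 \<le> p \<and> p < p + 1 \<and> p + 1 \<le> ?k + ?l + 1
        \<and> tree_col b (p - ?k) (p + 1 - ?k) = ?J p (p + 1)"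
      then have "p + 1 - ?k = p - ?k + 1" by linarith
      then show False using inner red node.IH(2)[of "p - ?k"] by simp
    qed
  qed
qed simp

lemma tree_col_noncrossing:
  "tree_col t i j \<noteq> Unc \<Longrightarrow> tree_col t k l \<noteq> Unc \<Longrightarrow> \<not> (i < k \<and> k < j \<and> j < l)"
proof (induction t arbitrary: i j k l rule: tree_induct_node)
  case (node g a b)
  let ?k = "leaves a" and ?J = "tree_col (node g a b)"
  have A: "\<not> (i < k \<and> k < j \<and> j < l)" if "tree_col a i j = ?J i j" "tree_col a k l = ?J k l"
    using node.IH(1)[of i j k l] node.prems that by metis
  have B: "\<not> (i - ?k < k - ?k \<and> k - ?k < j - ?k \<and> j - ?k < l - ?k)"
    if "tree_col b (i - ?k) (j - ?k) = ?J i j" "tree_col b (k - ?k) (l - ?k) = ?J k l"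
    using node.IH(2)[of "i - ?k" "j - ?k" "k - ?k" "l - ?k"] node.prems that by metis
  show ?case
    using tree_col_node_nonempty[OF node.prems(1)] tree_col_node_nonempty[OF node.prems(2)]
    by (elim disjE) (use A B in linarith)+
qed (auto split: if_splits)

lemma is_bnc_ev: "is_bnc (ev t)"
proof (cases t rule: tree_cases_node)
  case Leaf
  then show ?thesis by (simp add: is_bnc_def)
next
  case (node g a b)
  have "2 \<le> leaves t" using node leaves_pos[of a] leaves_pos[of b] by simp
  moreover have "\<forall>i j. tree_col t i j \<noteq> Unc \<longrightarrow> 1 \<le> i \<and> i < j \<and> j \<le> leaves t + 1"
    using tree_col_out[of _ _ t] by blast
  moreover have "\<forall>i j. tree_col t i j = Red \<longrightarrow> j \<noteq> i + 1 \<and> \<not> (i = 1 \<and> j = leaves t + 1)"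
    using tree_col_edge_not_red[of t] tree_col_base_in[of t] by fastforce
  moreover have "\<forall>i j k l. tree_col t i j \<noteq> Unc \<and> tree_col t k l \<noteq> Unc \<longrightarrow> \<not> (i < k \<and> k < j \<and> j < l)"
    using tree_col_noncrossing[of t] by blast
  ultimately show ?thesis unfolding is_bnc_def ev_eq_tree_col by simp
qed

lemma gen_bnc_eq_ev: "gen_bnc g = ev (node g Leaf Leaf)"
  by (simp add: gen_bnc_eq_record ev_eq_tree_col)

lemma suboperad_range_ev: "suboperad (range ev)"
  unfolding suboperad_def
proof (intro conjI ballI allI impI)
  show "range ev \<subseteq> {B. is_bnc B}" using is_bnc_ev by auto
  show "unit_bnc \<in> range ev" by (metis ev.simps(1) rangeI)
next
  fix C D i
  assume "C \<in> range ev" "D \<in> range ev" and i: "1 \<le> i \<and> i \<le> sz C"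
  then obtain t s where "C = ev t" "D = ev s" by auto
  then show "comp C i D \<in> range ev" using i ev_graft[of i t s] by (metis ev_eq_tree_col bnc.select_convs(1) rangeI)
qed

lemma ev_in_suboperad:
  assumes S: "suboperad S" and gens: "\<And>g. gen_bnc g \<in> S"
  shows "ev t \<in> S"
proof (induction t rule: tree_induct_node)
  case Leaf
  then show ?case using S by (simp add: suboperad_def)
next
  case (node g a b)
  have "sz (gen_bnc g) = 2" by (simp add: gen_bnc_eq_record)
  then have "comp (gen_bnc g) 2 (ev b) \<in> S" using S gens node by (simp add: suboperad_def)
  moreover have "1 \<le> sz (comp (gen_bnc g) 2 (ev b))" by (simp add: comp_eq_record gen_bnc_eq_record)
  ultimately show ?case using S node by (simp add: suboperad_def ev_node)
qed

lemma range_ev_eq_generated_suboperad: "range ev = generated_suboperad {r_gen, w_gen}"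
proof
  have "r_gen \<in> range ev" "w_gen \<in> range ev"
    using gen_bnc_eq_ev[of GenR] gen_bnc_eq_ev[of GenW] by (metis gen_bnc.simps rangeI)+
  then show "generated_suboperad {r_gen, w_gen} \<subseteq> range ev"
    unfolding generated_suboperad_def by (intro Inter_lower) (simp add: suboperad_range_ev)
next
  show "range ev \<subseteq> generated_suboperad {r_gen, w_gen}"
    unfolding generated_suboperad_def
  proof (intro subsetI InterI)
    fix B S
    assume "B \<in> range ev" and "S \<in> {S. suboperad S \<and> {r_gen, w_gen} \<subseteq> S}"
    moreover have "gen_bnc g \<in> {r_gen, w_gen}" for g by (cases g) simp_all
    ultimately show "B \<in> S" using ev_in_suboperad[of S] by blast
  qed
qed

section \<open>The kernel of the evaluation\<close>

lemma cong_node: "cong a a' \<Longrightarrow> cong b b' \<Longrightarrow> cong (node g a b) (node g a' b')"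
  unfolding node_eq_graft[of g a b] node_eq_graft[of g a' b']
  by (intro cong.comp cong.refl) (simp_all add: leaves_graft)

lemma cong_assoc_Leaf: "cong (node g (node g Leaf Leaf) Leaf) (node g Leaf (node g Leaf Leaf))"
  by (cases g) (simp_all add: cong.relR cong.relW)

lemma cong_assoc: "cong (node g (node g a b) c) (node g a (node g b c))"
proof -
  have "node g (node g a b) c = graft (graft (graft (node g (node g Leaf Leaf) Leaf) 3 c) 2 b) 1 a"
    and "node g a (node g b c) = graft (graft (graft (node g Leaf (node g Leaf Leaf)) 3 c) 2 b) 1 a"
    using leaves_pos[of b] by (simp_all add: graft_node)
  then show ?thesis
    by (simp only:) (intro cong.comp cong.refl cong_assoc_Leaf; simp add: leaves_graft leaves_pos)
qed

text \<open>Both sides have the same edges and base; their only diagonals, (1, 3) and (2, 4), both get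
  the colour glue_colour (edge_col g) (base_col g), which is Unc.\<close>

lemma ev_assoc_Leaf: "ev (node g (node g Leaf Leaf) Leaf) = ev (node g Leaf (node g Leaf Leaf))"
proof -
  have inner: "glue_colour (edge_col g) (base_col g) = Unc" by (cases g) (simp_all add: glue_colour_def)
  have "tree_col (node g (node g Leaf Leaf) Leaf) p q = tree_col (node g Leaf (node g Leaf Leaf)) p q" for p q
  proof (cases "1 \<le> p \<and> p < q \<and> q \<le> 4")
    case True
    then have "(p = 1 \<or> p = 2 \<or> p = 3) \<and> (q = 2 \<or> q = 3 \<or> q = 4)" by auto
    then show ?thesis using inner by (elim conjE disjE) (simp_all add: tree_col_node join_col_def)
  next
    case False
    then show ?thesis
      using tree_col_out[of p q "node g (node g Leaf Leaf) Leaf"] tree_col_out[of p q "node g Leaf (node g Leaf Leaf)"]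
      by (simp add: eval_nat_numeral)
  qed
  then show ?thesis by (simp add: ev_eq_tree_col ext)
qed

lemma ev_eq_if_cong: "cong t s \<Longrightarrow> ev t = ev s"
proof (induction rule: cong.induct)
  case relW
  show ?case using ev_assoc_Leaf[of GenW] by simp
next
  case relR
  show ?case using ev_assoc_Leaf[of GenR] by simp
next
  case (comp t t' s s' i)
  have "leaves t = leaves t'" using comp.IH(1) by (simp add: ev_eq_tree_col)
  then show ?case using comp ev_graft by metis
qed simp_all

definition root_is :: "gen \<Rightarrow> tree \<Rightarrow> bool" where
  "root_is g t \<longleftrightarrow> (\<exists>a b. t = node g a b)"

lemma node_eq_node_iff: "node g a b = node h c d \<longleftrightarrow> g = h \<and> a = c \<and> b = d"
  by (cases g; cases h) simp_all

lemma cong_rotate_left: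
  "\<exists>a' b'. cong (node g a b) (node g a' b') \<and> \<not> root_is g a' \<and> leaves a' + leaves b' = leaves a + leaves b"
proof (induction a arbitrary: b rule: tree_induct_node)
  case Leaf
  have "\<not> root_is g Leaf" by (simp add: root_is_def)
  then show ?case using cong.refl by blast
next
  case (node h a1 a2)
  show ?case
  proof (cases "h = g")
    case True
    obtain a' b' where rot: "cong (node g a1 (node g a2 b)) (node g a' b')" "\<not> root_is g a'"
      "leaves a' + leaves b' = leaves a1 + leaves (node g a2 b)"
      using node.IH(1) by blast
    have "cong (node g (node h a1 a2) b) (node g a' b')"
      using True cong_assoc rot(1) by (blast intro: cong.trans)
    then show ?thesis using rot(2,3) by (auto simp: add.assoc)
  next
    case False
    then have "\<not> root_is g (node h a1 a2)" by (auto simp: root_is_def node_eq_node_iff)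
    then show ?thesis using cong.refl by blast
  qed
qed

lemma glue_edge_base_other: "g \<noteq> h \<Longrightarrow> glue_colour (edge_col g) (base_col h) \<noteq> Unc"
  by (cases g; cases h) (simp_all add: glue_colour_def)

lemma tree_col_node_split_less:
  assumes "\<not> root_is g a2" "leaves a1 < leaves a2" "leaves a1 + leaves b1 = leaves a2 + leaves b2"
  shows "tree_col (node g a1 b1) \<noteq> tree_col (node g a2 b2)"
proof
  assume eq: "tree_col (node g a1 b1) = tree_col (node g a2 b2)"
  have pos: "1 \<le> leaves a1" "1 \<le> leaves b1" "1 \<le> leaves b2" using leaves_pos by auto
  have "tree_col (node g a1 b1) 1 (leaves a2 + 1) = Unc"
    unfolding tree_col_node by (rule join_col_crossing) (use assms pos in linarith)+
  moreover have "tree_col (node g a2 b2) 1 (leaves a2 + 1) = glue_colour (edge_col g) (tree_col a2 1 (leaves a2 + 1))"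
    unfolding tree_col_node by (rule join_col_left_edge) (use pos in simp_all)
  moreover obtain h c d where "a2 = node h c d" "h \<noteq> g"
    using assms(1,2) pos leaves_eq_1_iff[of a2] by (cases a2 rule: tree_cases_node) (auto simp: root_is_def node_eq_node_iff)
  ultimately show False using eq glue_edge_base_other tree_col_base_node by metis
qed

lemma glue_colour_inj:
  "x \<in> {Blue, Unc} \<Longrightarrow> d \<in> {Blue, Unc} \<Longrightarrow> e \<in> {Blue, Unc} \<Longrightarrow> glue_colour x d = glue_colour x e \<Longrightarrow> d = e"
  by (auto simp: glue_colour_def)

lemma tree_col_node_inj:
  assumes k: "leaves a1 = leaves a2" and l: "leaves b1 = leaves b2"
    and eq: "tree_col (node g a1 b1) = tree_col (node g a2 b2)"
  shows "tree_col a1 = tree_col a2 \<and> tree_col b1 = tree_col b2"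
proof -
  let ?k = "leaves a1" and ?l = "leaves b1"
  have pos: "1 \<le> ?k" "1 \<le> ?l" using leaves_pos by auto
  have J: "join_col (edge_col g) (base_col g) ?k ?l (tree_col a1) (tree_col b1) p q
      = join_col (edge_col g) (base_col g) ?k ?l (tree_col a2) (tree_col b2) p q" for p q
    using eq k l by (simp add: tree_col_node)
  have base: "tree_col a1 1 (?k + 1) = tree_col a2 1 (?k + 1)" "tree_col b1 1 (?l + 1) = tree_col b2 1 (?l + 1)"
    using J[of 1 "?k + 1"] J[of "?k + 1" "?k + ?l + 1"] pos k l
      edge_col_in tree_col_base_in[of a1] tree_col_base_in[of a2] tree_col_base_in[of b1] tree_col_base_in[of b2]
    by (auto simp: join_col_left_edge join_col_right_edge intro: glue_colour_inj)
  have "tree_col a1 p q = tree_col a2 p q" for p q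
  proof (cases "1 \<le> p \<and> p < q \<and> q \<le> ?k + 1 \<and> \<not> (p = 1 \<and> q = ?k + 1)")
    case True
    then show ?thesis using J[of p q] pos by (simp add: join_col_left)
  next
    case False
    then show ?thesis using base tree_col_out[of p q a1] tree_col_out[of p q a2] k by auto
  qed
  moreover have "tree_col b1 p q = tree_col b2 p q" for p q
  proof (cases "1 \<le> p \<and> p < q \<and> q \<le> ?l + 1 \<and> \<not> (p = 1 \<and> q = ?l + 1)")
    case True
    then show ?thesis using J[of "p + ?k" "q + ?k"] pos by (simp add: join_col_right)
  next
    case False
    then show ?thesis using base tree_col_out[of p q b1] tree_col_out[of p q b2] l by auto
  qed
  ultimately show ?thesis by (simp add: fun_eq_iff)
qed

lemma ev_eq_iff: "ev t = ev s \<longleftrightarrow> leaves t = leaves s \<and> tree_col t = tree_col s"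
  by (simp add: ev_eq_tree_col)

lemma cong_if_ev_eq: "ev t = ev s \<Longrightarrow> cong t s"
proof (induction "leaves t" arbitrary: t s rule: less_induct)
  case less
  show ?case
  proof (cases t rule: tree_cases_node)
    case Leaf
    then have "leaves s = 1" using less.prems ev_eq_iff[of t s] by simp
    then show ?thesis using Leaf leaves_eq_1_iff[of s] by (simp add: cong.refl)
  next
    case (node g a b)
    then have "s \<noteq> Leaf" using less.prems leaves_pos[of a] leaves_pos[of b] by (auto simp: ev_eq_iff)
    then obtain h c d where s: "s = node h c d" by (cases s rule: tree_cases_node) auto
    have "base_col g = base_col h"
      using less.prems tree_col_base_node[of g a b] tree_col_base_node[of h c d] node s by (simp add: ev_eq_iff)
    then have h: "h = g" by (cases g; cases h) simp_all
    obtain a1 b1 where r1: "cong t (node g a1 b1)" "\<not> root_is g a1" "leaves a1 + leaves b1 = leaves t"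
      using cong_rotate_left[of g a b] node by auto
    obtain a2 b2 where r2: "cong s (node g a2 b2)" "\<not> root_is g a2" "leaves a2 + leaves b2 = leaves s"
      using cong_rotate_left[of g c d] s h by auto
    have eq: "tree_col (node g a1 b1) = tree_col (node g a2 b2)" "leaves t = leaves s"
      using less.prems ev_eq_if_cong[OF r1(1)] ev_eq_if_cong[OF r2(1)] by (simp_all add: ev_eq_iff)
    have "leaves a1 = leaves a2"
      using tree_col_node_split_less[OF r2(2), of a1 b1 b2] tree_col_node_split_less[OF r1(2), of a2 b2 b1]
        eq r1(3) r2(3) by (metis linorder_neqE_nat)
    moreover from this have "leaves b1 = leaves b2" using eq r1(3) r2(3) by simp
    ultimately have "tree_col a1 = tree_col a2 \<and> tree_col b1 = tree_col b2"
      using tree_col_node_inj eq(1) by blast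
    moreover have "leaves a1 < leaves t" "leaves b1 < leaves t" using r1(3) leaves_pos[of a1] leaves_pos[of b1] by simp_all
    ultimately have "cong a1 a2" "cong b1 b2"
      using less.hyps \<open>leaves a1 = leaves a2\<close> \<open>leaves b1 = leaves b2\<close> by (simp_all add: ev_eq_iff)
    then have "cong (node g a1 b1) (node g a2 b2)" by (rule cong_node)
    then show ?thesis using r1(1) r2(1) by (blast intro: cong.trans cong.sym)
  qed
qed

theorem theorem3p33:
  shows "(\<forall>t i s. 1 \<le> i \<and> i \<le> leaves t \<longrightarrow> ev (graft t i s) = comp (ev t) i (ev s))
    \<and> range ev = generated_suboperad {r_gen, w_gen}
    \<and> (\<forall>t s. ev t = ev s \<longleftrightarrow> cong t s)"
  using ev_graft range_ev_eq_generated_suboperad ev_eq_if_cong cong_if_ev_eq by blast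

end
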